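(* Let $K\subset\mathbb{R}^d$, $d\ge 2$, be a convex body and $\delta\in(0,1)$. Then $\delta\neq\tfrac12$ if and only if for every point $x\in\partial K$ and every $(d-2)$-dimensional affine subspace $\ell$ with $x\in\ell$ and $\ell\cap\operatorname{int}K=\emptyset$, there exist two distinct hyperplanes of the form $\{y: y\cdot\theta=t_K(\theta,\delta)\}$, $\theta\in\mathbb{S}^{d-1}$ (i.e. hyperplanes supporting $K_{[\delta]}$), that contain $\ell$.
   Context: For $\theta\in\mathbb{S}^{d-1}$, $t\in\mathbb{R}$ let $H^-(\theta,t)=\{x:x\cdot\theta\ge t\}$. For a convex body $K$ and $\delta\in(0,1)$, $t_K(\theta,\delta)$ is the unique real number with $|K\cap H^-(\theta,t_K(\theta,\delta))|_d=\delta|K|_d$. The surface of flotation $K_{[\delta]}$ is the envelope of the hyperplanes $\{y:y\cdot\theta=t_K(\theta,\delta)\}$, $\theta\in\mathbb{S}^{d-1}$. *)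

theory Defs
  imports "HOL-Analysis.Analysis"
begin

definition convex_body :: "'a::euclidean_space set \<Rightarrow> bool" where
  "convex_body K \<longleftrightarrow> convex K \<and> compact K \<and> interior K \<noteq> {}"

definition Hminus :: "'a::euclidean_space \<Rightarrow> real \<Rightarrow> 'a set" where
  "Hminus \<theta> t = {x. x \<bullet> \<theta> \<ge> t}"

definition tK :: "'a::euclidean_space set \<Rightarrow> 'a \<Rightarrow> real \<Rightarrow> real" where
  "tK K \<theta> \<delta> = (THE t. measure lebesgue (K \<inter> Hminus \<theta> t) = \<delta> * measure lebesgue K)"

definition flot_hyperplane :: "'a::euclidean_space set \<Rightarrow> real \<Rightarrow> 'a \<Rightarrow> 'a set" where
  "flot_hyperplane K \<delta> \<theta> = {y. y \<bullet> \<theta> = tK K \<theta> \<delta>}"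

end

theory Submission
  imports Defs
begin

text \<open>
  For \<open>\<delta> \<noteq> 1/2\<close>: a hyperplane through the flat \<open>L\<close> supporting \<open>K\<close> has a unit normal
  \<open>u\<close>; with a unit \<open>w\<close> orthogonal to \<open>u\<close> and to \<open>L\<close>, the hyperplane through \<open>L\<close> with
  normal \<open>cos \<phi> u + sin \<phi> w\<close> cuts off a volume of \<open>K\<close> that varies continuously from
  \<open>|K|\<close> at \<open>\<phi> = 0\<close> to \<open>0\<close> at \<open>\<phi> = pi\<close>. It equals \<open>\<delta> |K|\<close> at some angle \<open>\<phi>1\<close> and
  \<open>(1 - \<delta>) |K|\<close> at some angle \<open>\<phi>2\<close>; reversing the second normal gives a second
  hyperplane through \<open>L\<close> cutting off \<open>\<delta> |K|\<close>, and \<open>\<phi>1 \<noteq> \<phi>2\<close> because \<open>\<delta> \<noteq> 1 - \<delta>\<close>.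

  For \<open>\<delta> = 1/2\<close>: take \<open>L\<close> inside a supporting hyperplane \<open>y \<bullet> u = x \<bullet> u\<close> at a
  boundary point \<open>x\<close>. The normals of two distinct halving hyperplanes through \<open>L\<close>,
  together with \<open>L\<close>, span the whole space, so \<open>u\<close> lies in their span and, after sign
  changes \<open>e1, e2\<close>, the open quadrant \<open>y \<bullet> e1 > x \<bullet> e1, y \<bullet> e2 > x \<bullet> e2\<close> lies strictly
  below the supporting hyperplane and misses \<open>K\<close>. As both hyperplanes halve \<open>K\<close>, the
  opposite quadrant then meets \<open>K\<close> in a null set, hence misses the interior. But the
  interior meets the hyperplane \<open>y \<bullet> e1 = x \<bullet> e1\<close>, and moving from such a point along
  \<open>\<plusminus>(e1 + e2)\<close> enters one of the two quadrants.
\<close>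

section \<open>Measure of half-space sections\<close>

lemma sets_lebesgue_halfspaces:
  fixes \<theta> :: "'a::euclidean_space"
  shows "Hminus \<theta> t \<in> sets lebesgue"
    and "{y. c < y \<bullet> \<theta>} \<in> sets lebesgue"
    and "{y. y \<bullet> \<theta> < c} \<in> sets lebesgue"
  unfolding Hminus_def
  by (simp_all add: borel_closed borel_open closed_halfspace_component_ge
      open_halfspace_component_gt open_halfspace_component_lt)

lemma hyperplane_null_sets:
  fixes \<theta> :: "'a::euclidean_space"
  assumes "\<theta> \<noteq> 0"
  shows "{y. y \<bullet> \<theta> = c} \<in> null_sets lebesgue"
  using negligible_hyperplane[of \<theta> c] assms
  by (simp add: negligible_iff_null_sets inner_commute)

lemma measure_Int_halfspace_gt:
  fixes \<theta> :: "'a::euclidean_space"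
  assumes "S \<in> sets lebesgue" "\<theta> \<noteq> 0"
  shows "measure lebesgue (S \<inter> {y. c < y \<bullet> \<theta>}) = measure lebesgue (S \<inter> Hminus \<theta> c)"
proof -
  have "S \<inter> {y. c < y \<bullet> \<theta>} = S \<inter> Hminus \<theta> c - {y. y \<bullet> \<theta> = c}"
    by (auto simp: Hminus_def)
  then show ?thesis
    using measure_Diff_null_set[OF sets.Int[OF assms(1) sets_lebesgue_halfspaces(1)]
        hyperplane_null_sets[OF assms(2)]]
    by simp
qed

lemma measure_split_by_hyperplane:
  fixes \<theta> :: "'a::euclidean_space"
  assumes "S \<in> lmeasurable" "\<theta> \<noteq> 0"
  shows "measure lebesgue S
    = measure lebesgue (S \<inter> {y. c < y \<bullet> \<theta>}) + measure lebesgue (S \<inter> {y. y \<bullet> \<theta> < c})"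
proof -
  have "measure lebesgue S = measure lebesgue (S - {y. y \<bullet> \<theta> = c})"
    using assms by (simp add: measure_Diff_null_set hyperplane_null_sets)
  also have "S - {y. y \<bullet> \<theta> = c} = (S \<inter> {y. c < y \<bullet> \<theta>}) \<union> (S \<inter> {y. y \<bullet> \<theta> < c})"
    by auto
  also have "measure lebesgue \<dots>
      = measure lebesgue (S \<inter> {y. c < y \<bullet> \<theta>}) + measure lebesgue (S \<inter> {y. y \<bullet> \<theta> < c})"
    using fmeasurable_Int_fmeasurable[OF assms(1) sets_lebesgue_halfspaces(2)]
      fmeasurable_Int_fmeasurable[OF assms(1) sets_lebesgue_halfspaces(3)]
    by (intro measure_Un_AE AE_I2) auto
  finally show ?thesis .
qed

lemma measure_Int_Hminus_uminus:
  fixes K :: "'a::euclidean_space set"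
  assumes "K \<in> lmeasurable" "\<theta> \<noteq> 0"
  shows "measure lebesgue (K \<inter> Hminus (-\<theta>) (-t))
    = measure lebesgue K - measure lebesgue (K \<inter> Hminus \<theta> t)"
proof -
  have "{y. -t < y \<bullet> -\<theta>} = {y. y \<bullet> \<theta> < t}"
    by auto
  then have "measure lebesgue (K \<inter> Hminus (-\<theta>) (-t)) = measure lebesgue (K \<inter> {y. y \<bullet> \<theta> < t})"
    using measure_Int_halfspace_gt[OF fmeasurableD[OF assms(1)], of "-\<theta>" "-t"] assms(2) by simp
  then show ?thesis
    using measure_split_by_hyperplane[OF assms, of t]
      measure_Int_halfspace_gt[OF fmeasurableD[OF assms(1)] assms(2)]
    by simp
qed

lemma measure_opposite_quadrants_eq:
  fixes S :: "'a::euclidean_space set"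
  assumes "S \<in> lmeasurable" "e1 \<noteq> 0" "e2 \<noteq> 0"
    and "measure lebesgue (S \<inter> {y. c1 < y \<bullet> e1}) = measure lebesgue (S \<inter> {y. y \<bullet> e2 < c2})"
  shows "measure lebesgue (S \<inter> {y. c1 < y \<bullet> e1} \<inter> {y. c2 < y \<bullet> e2})
       = measure lebesgue (S \<inter> {y. y \<bullet> e1 < c1} \<inter> {y. y \<bullet> e2 < c2})"
proof -
  have "S \<inter> {y. c1 < y \<bullet> e1} \<in> lmeasurable" "S \<inter> {y. y \<bullet> e2 < c2} \<in> lmeasurable"
    using assms(1) sets_lebesgue_halfspaces by (auto intro: fmeasurable_Int_fmeasurable)
  note split = measure_split_by_hyperplane[OF this(1) assms(3), of c2]
    measure_split_by_hyperplane[OF this(2) assms(2), of c1]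
  have reorder: "S \<inter> {y. y \<bullet> e2 < c2} \<inter> {y. c1 < y \<bullet> e1} = S \<inter> {y. c1 < y \<bullet> e1} \<inter> {y. y \<bullet> e2 < c2}"
    "S \<inter> {y. y \<bullet> e2 < c2} \<inter> {y. y \<bullet> e1 < c1} = S \<inter> {y. y \<bullet> e1 < c1} \<inter> {y. y \<bullet> e2 < c2}"
    by auto
  show ?thesis
    using split assms(4) unfolding reorder by linarith
qed

lemma convex_body_lmeasurable: "convex_body K \<Longrightarrow> K \<in> lmeasurable"
  by (simp add: convex_body_def lmeasurable_compact)

lemma convex_body_measure_pos:
  fixes K :: "'a::euclidean_space set"
  assumes "convex_body K"
  shows "0 < measure lebesgue K"
proof -
  have "\<not> negligible K"
    using assms negligible_convex_interior by (auto simp: convex_body_def)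
  then show ?thesis
    using negligible_iff_measure0[OF convex_body_lmeasurable[OF assms]] by (simp add: less_le)
qed

lemma measure_open_pos:
  fixes S :: "'a::euclidean_space set"
  assumes "open S" "bounded S" "S \<noteq> {}"
  shows "0 < measure lebesgue S"
  using open_not_negligible[OF assms(1,3)]
    negligible_iff_measure0[OF lmeasurable_open[OF assms(2,1)]]
  by (simp add: less_le)

lemma open_subset_measure_zero_empty:
  fixes S U :: "'a::euclidean_space set"
  assumes "open U" "U \<subseteq> S" "S \<in> lmeasurable" "measure lebesgue S = 0"
  shows "U = {}"
proof -
  have "negligible S"
    using assms(3,4) by (simp add: negligible_iff_measure0)
  then have "negligible U"
    using assms(2) by (rule negligible_subset)
  then show ?thesis
    using open_not_negligible[OF assms(1)] by blast
qed

lemma measure_pos_meets_interior: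
  fixes K S :: "'a::euclidean_space set"
  assumes "convex K" "closed K" "S \<subseteq> K" "0 < measure lebesgue S"
  obtains p where "p \<in> S" "p \<in> interior K"
proof -
  have "S - interior K \<subseteq> frontier K"
    using assms(2,3) by (auto simp: frontier_def)
  then have "negligible (S - interior K)"
    using negligible_convex_frontier[OF assms(1)] negligible_subset by blast
  moreover have "\<not> negligible S"
    using assms(4) negligible_imp_measure0 by force
  ultimately show ?thesis
    using that by (metis Diff_triv disjoint_iff)
qed

lemma convex_interior_meets_slab:
  fixes K :: "'a::euclidean_space set"
  assumes "convex K" "p \<in> interior K" "q \<in> interior K" "q \<bullet> \<theta> < t1" "t1 < t2" "t2 \<le> p \<bullet> \<theta>"
  shows "interior K \<inter> {y. t1 < y \<bullet> \<theta>} \<inter> {y. y \<bullet> \<theta> < t2} \<noteq> {}"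
proof -
  have "\<theta> \<bullet> q \<le> (t1 + t2) / 2" "(t1 + t2) / 2 \<le> \<theta> \<bullet> p"
    using assms(4-6) by (simp_all add: inner_commute)
  then obtain w where "w \<in> interior K" "\<theta> \<bullet> w = (t1 + t2) / 2"
    using connected_ivt_hyperplane[OF convex_connected[OF convex_interior[OF assms(1)]] assms(3,2)]
    by blast
  with assms(5) show ?thesis
    by (auto simp: inner_commute)
qed

lemma tendsto_measure_Int_Hminus:
  fixes K :: "'a::euclidean_space set"
  assumes K: "K \<in> lmeasurable" and "\<theta> \<noteq> 0" and \<theta>: "\<theta>s \<longlonglongrightarrow> \<theta>" and c: "cs \<longlonglongrightarrow> c"
  shows "(\<lambda>n. measure lebesgue (K \<inter> Hminus (\<theta>s n) (cs n))) \<longlonglongrightarrow> measure lebesgue (K \<inter> Hminus \<theta> c)"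
proof -
  have "(\<lambda>n. integral\<^sup>L lebesgue (indicator (K \<inter> Hminus (\<theta>s n) (cs n)) :: 'a \<Rightarrow> real))
     \<longlonglongrightarrow> integral\<^sup>L lebesgue (indicator (K \<inter> Hminus \<theta> c))"
  proof (rule integral_dominated_convergence[where w="indicator K"])
    show "indicator (K \<inter> Hminus \<theta> c) \<in> borel_measurable lebesgue"
      "indicator (K \<inter> Hminus (\<theta>s n) (cs n)) \<in> borel_measurable lebesgue" for n
      using fmeasurableD[OF K] sets_lebesgue_halfspaces(1) by (auto intro: borel_measurable_indicator)
    show "integrable lebesgue (indicator K :: 'a \<Rightarrow> real)"
      using K unfolding fmeasurable_def by (blast intro: integrable_real_indicator)
    show "AE y in lebesgue. norm (indicator (K \<inter> Hminus (\<theta>s n) (cs n)) y :: real) \<le> indicator K y" for n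
      by (auto simp: indicator_def)
    have "AE y in lebesgue. y \<notin> {y. y \<bullet> \<theta> = c}"
      using hyperplane_null_sets[OF \<open>\<theta> \<noteq> 0\<close>] by (rule AE_not_in)
    then show "AE y in lebesgue. (\<lambda>n. indicator (K \<inter> Hminus (\<theta>s n) (cs n)) y :: real)
        \<longlonglongrightarrow> indicator (K \<inter> Hminus \<theta> c) y"
    proof eventually_elim
      case (elim y)
      have lim: "(\<lambda>n. y \<bullet> \<theta>s n - cs n) \<longlonglongrightarrow> y \<bullet> \<theta> - c"
        by (intro tendsto_intros \<theta> c)
      have "\<forall>\<^sub>F n in sequentially. (cs n \<le> y \<bullet> \<theta>s n \<longleftrightarrow> c \<le> y \<bullet> \<theta>)"
      proof (cases "c < y \<bullet> \<theta>")
        case True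
        with order_tendstoD(1)[OF lim, of 0] show ?thesis
          by (auto elim: eventually_mono)
      next
        case False
        with elim have "y \<bullet> \<theta> - c < 0" by auto
        with order_tendstoD(2)[OF lim, of 0] show ?thesis
          by (auto elim: eventually_mono)
      qed
      then show ?case
        by (rule tendsto_eventually[OF eventually_mono]) (auto simp: indicator_def Hminus_def)
    qed
  qed
  then show ?thesis
    by simp
qed

lemma continuous_on_measure_Int_Hminus:
  fixes K :: "'a::euclidean_space set" and \<theta> :: "real \<Rightarrow> 'a"
  assumes "K \<in> lmeasurable" "continuous_on S \<theta>" "continuous_on S c" "\<And>s. s \<in> S \<Longrightarrow> \<theta> s \<noteq> 0"
  shows "continuous_on S (\<lambda>s. measure lebesgue (K \<inter> Hminus (\<theta> s) (c s)))"
  unfolding continuous_on_sequentially comp_def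
proof (intro allI ballI impI)
  fix s :: "nat \<Rightarrow> real" and a
  assume "a \<in> S" "(\<forall>n. s n \<in> S) \<and> s \<longlonglongrightarrow> a"
  with assms(2,3) have "(\<lambda>n. \<theta> (s n)) \<longlonglongrightarrow> \<theta> a" "(\<lambda>n. c (s n)) \<longlonglongrightarrow> c a"
    unfolding continuous_on_sequentially comp_def by blast+
  then show "(\<lambda>n. measure lebesgue (K \<inter> Hminus (\<theta> (s n)) (c (s n))))
      \<longlonglongrightarrow> measure lebesgue (K \<inter> Hminus (\<theta> a) (c a))"
    using tendsto_measure_Int_Hminus assms(1,4) \<open>a \<in> S\<close> by blast
qed

section \<open>The cutting level t_K\<close>

lemma exists_Hminus_level:
  fixes K :: "'a::euclidean_space set"
  assumes "K \<in> lmeasurable" "bounded K" "\<theta> \<noteq> 0" "0 \<le> \<delta>" "\<delta> \<le> 1"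
  obtains t where "measure lebesgue (K \<inter> Hminus \<theta> t) = \<delta> * measure lebesgue K"
proof -
  define f where "f t = measure lebesgue (K \<inter> Hminus \<theta> t)" for t
  obtain B where B: "B > 0" "\<And>y. y \<in> K \<Longrightarrow> norm y \<le> B"
    using assms(2) unfolding bounded_pos by blast
  define R where "R = B * norm \<theta>"
  have "\<bar>y \<bullet> \<theta>\<bar> \<le> R" if "y \<in> K" for y
    using Cauchy_Schwarz_ineq2[of y \<theta>] mult_right_mono[OF B(2)[OF that] norm_ge_zero[of \<theta>]]
    by (simp add: R_def)
  then have "K \<inter> Hminus \<theta> (-R) = K" "K \<inter> Hminus \<theta> (R + 1) = {}"
    by (fastforce simp: Hminus_def abs_le_iff)+
  then have "f (R + 1) \<le> \<delta> * measure lebesgue K" "\<delta> * measure lebesgue K \<le> f (-R)"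
    using assms(4,5) by (auto simp: f_def mult_left_le_one_le)
  moreover have "-R \<le> R + 1"
    using B(1) by (simp add: R_def)
  moreover have "continuous_on {-R..R + 1} f"
    unfolding f_def using assms(1,3) by (intro continuous_on_measure_Int_Hminus continuous_intros)
  ultimately obtain t where "f t = \<delta> * measure lebesgue K"
    using IVT2' by blast
  then show ?thesis
    using that by (simp add: f_def)
qed

lemma measure_Int_Hminus_strict_antimono:
  fixes K :: "'a::euclidean_space set"
  assumes K: "convex_body K" and "t1 < t2"
    and "0 < measure lebesgue (K \<inter> Hminus \<theta> t2)"
    and "measure lebesgue (K \<inter> Hminus \<theta> t1) < measure lebesgue K"
  shows "measure lebesgue (K \<inter> Hminus \<theta> t2) < measure lebesgue (K \<inter> Hminus \<theta> t1)"
proof -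
  have "convex K" "closed K" "bounded K" "K \<in> lmeasurable"
    using K by (auto simp: convex_body_def compact_imp_closed compact_imp_bounded convex_body_lmeasurable)
  note KH = fmeasurable_Int_fmeasurable[OF \<open>K \<in> lmeasurable\<close> sets_lebesgue_halfspaces(1)]
  obtain p where p: "p \<in> interior K" "t2 \<le> p \<bullet> \<theta>"
    using measure_pos_meets_interior[OF \<open>convex K\<close> \<open>closed K\<close> Int_lower1 assms(3)]
    unfolding Hminus_def by blast
  have "measure lebesgue (K - K \<inter> Hminus \<theta> t1) = measure lebesgue K - measure lebesgue (K \<inter> Hminus \<theta> t1)"
    using \<open>K \<in> lmeasurable\<close> KH by (intro measurable_measure_Diff) (auto intro: fmeasurableD)
  with assms(4) have "0 < measure lebesgue (K - K \<inter> Hminus \<theta> t1)"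
    by simp
  then obtain q where "q \<in> K - K \<inter> Hminus \<theta> t1" and q: "q \<in> interior K"
    by (rule measure_pos_meets_interior[OF \<open>convex K\<close> \<open>closed K\<close> Diff_subset])
  then have "q \<bullet> \<theta> < t1"
    by (auto simp: Hminus_def)
  define U where "U = interior K \<inter> {y. t1 < y \<bullet> \<theta>} \<inter> {y. y \<bullet> \<theta> < t2}"
  have "open U"
    unfolding U_def by (intro open_Int open_interior open_halfspace_component_gt open_halfspace_component_lt)
  have "U \<subseteq> K \<inter> Hminus \<theta> t1 - K \<inter> Hminus \<theta> t2"
    using interior_subset by (auto simp: U_def Hminus_def)
  have "0 < measure lebesgue U"
  proof (rule measure_open_pos[OF \<open>open U\<close>])
    show "bounded U"
      using \<open>U \<subseteq> _\<close> bounded_subset[OF \<open>bounded K\<close>] by blast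
    show "U \<noteq> {}"
      unfolding U_def
      by (rule convex_interior_meets_slab[OF \<open>convex K\<close> p(1) q \<open>q \<bullet> \<theta> < t1\<close> \<open>t1 < t2\<close> p(2)])
  qed
  also have "measure lebesgue U \<le> measure lebesgue (K \<inter> Hminus \<theta> t1 - K \<inter> Hminus \<theta> t2)"
    using \<open>U \<subseteq> _\<close> KH borel_open[OF \<open>open U\<close>]
    by (intro measure_mono_fmeasurable) (auto intro: fmeasurable.Diff)
  also have "\<dots> = measure lebesgue (K \<inter> Hminus \<theta> t1) - measure lebesgue (K \<inter> Hminus \<theta> t2)"
    using KH \<open>t1 < t2\<close> by (intro measurable_measure_Diff fmeasurableD) (auto simp: Hminus_def)
  finally show ?thesis
    by simp
qed

lemma tK_eq_iff:
  fixes K :: "'a::euclidean_space set"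
  assumes K: "convex_body K" and "\<theta> \<noteq> 0" "0 < \<delta>" "\<delta> < 1"
  shows "tK K \<theta> \<delta> = t \<longleftrightarrow> measure lebesgue (K \<inter> Hminus \<theta> t) = \<delta> * measure lebesgue K"
proof -
  define level where "level t \<longleftrightarrow> measure lebesgue (K \<inter> Hminus \<theta> t) = \<delta> * measure lebesgue K" for t
  have bounds: "0 < \<delta> * measure lebesgue K" "\<delta> * measure lebesgue K < measure lebesgue K"
    using convex_body_measure_pos[OF K] assms(3,4) by simp_all
  have no_smaller: "\<not> t1 < t2" if "level t1" "level t2" for t1 t2
  proof
    assume "t1 < t2"
    from measure_Int_Hminus_strict_antimono[OF K this, of \<theta>] that bounds show False
      by (simp add: level_def)
  qed
  obtain t0 where "level t0"
    using exists_Hminus_level[OF convex_body_lmeasurable[OF K] _ \<open>\<theta> \<noteq> 0\<close>, of \<delta>] K assms(3,4)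
    unfolding level_def convex_body_def by (auto intro: compact_imp_bounded)
  then have "\<exists>!t. level t"
    using no_smaller by (metis linorder_neqE)
  then show ?thesis
    unfolding tK_def level_def[symmetric] using theI' by metis
qed

lemma tK_uminus:
  fixes K :: "'a::euclidean_space set"
  assumes K: "convex_body K" and "\<theta> \<noteq> 0" "0 < \<delta>" "\<delta> < 1"
  shows "tK K (-\<theta>) \<delta> = - tK K \<theta> (1 - \<delta>)"
proof -
  have "measure lebesgue (K \<inter> Hminus \<theta> (tK K \<theta> (1 - \<delta>))) = (1 - \<delta>) * measure lebesgue K"
    using tK_eq_iff[OF K \<open>\<theta> \<noteq> 0\<close>, of "1 - \<delta>" "tK K \<theta> (1 - \<delta>)"] assms(3,4) by simp
  then have "measure lebesgue (K \<inter> Hminus (-\<theta>) (- tK K \<theta> (1 - \<delta>))) = \<delta> * measure lebesgue K"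
    using measure_Int_Hminus_uminus[OF convex_body_lmeasurable[OF K] \<open>\<theta> \<noteq> 0\<close>, of "tK K \<theta> (1 - \<delta>)"]
    by (simp add: algebra_simps)
  then show ?thesis
    using tK_eq_iff[OF K _ assms(3,4)] \<open>\<theta> \<noteq> 0\<close> by simp
qed

lemma tK_half_uminus:
  fixes K :: "'a::euclidean_space set"
  assumes "convex_body K" "\<theta> \<noteq> 0"
  shows "tK K (-\<theta>) (1/2) = - tK K \<theta> (1/2)"
  using tK_uminus[OF assms, of "1/2"] by simp

lemma measure_halfspaces_tK_half:
  fixes K :: "'a::euclidean_space set"
  assumes K: "convex_body K" and "e \<noteq> 0" "tK K e (1/2) = x \<bullet> e"
  shows "measure lebesgue (K \<inter> {y. x \<bullet> e < y \<bullet> e}) = measure lebesgue K / 2"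
    and "measure lebesgue (K \<inter> {y. y \<bullet> e < x \<bullet> e}) = measure lebesgue K / 2"
proof -
  show gt: "measure lebesgue (K \<inter> {y. x \<bullet> e < y \<bullet> e}) = measure lebesgue K / 2"
    using tK_eq_iff[OF K \<open>e \<noteq> 0\<close>, of "1/2" "x \<bullet> e"] assms(3)
      measure_Int_halfspace_gt[OF fmeasurableD[OF convex_body_lmeasurable[OF K]] \<open>e \<noteq> 0\<close>]
    by simp
  then show "measure lebesgue (K \<inter> {y. y \<bullet> e < x \<bullet> e}) = measure lebesgue K / 2"
    using measure_split_by_hyperplane[OF convex_body_lmeasurable[OF K] \<open>e \<noteq> 0\<close>, of "x \<bullet> e"] by simp
qed

lemma flot_hyperplane_contains_translate:
  assumes "subspace T" "(+) x ` T \<subseteq> flot_hyperplane K \<delta> \<theta>"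
  shows "tK K \<theta> \<delta> = x \<bullet> \<theta>" and "v \<in> T \<Longrightarrow> v \<bullet> \<theta> = 0"
proof -
  have on_hyperplane: "x + v \<in> flot_hyperplane K \<delta> \<theta>" if "v \<in> T" for v
    using that assms(2) by blast
  from on_hyperplane[OF subspace_0[OF assms(1)]] show "tK K \<theta> \<delta> = x \<bullet> \<theta>"
    by (simp add: flot_hyperplane_def)
  then show "v \<bullet> \<theta> = 0" if "v \<in> T"
    using on_hyperplane[OF that] by (simp add: flot_hyperplane_def inner_add_left)
qed

section \<open>Rotating a supporting hyperplane about a flat\<close>

lemma supporting_normal_through_affine:
  fixes K L :: "'a::euclidean_space set"
  assumes "convex K" "interior K \<noteq> {}" "affine L" "x \<in> L" "L \<inter> interior K = {}"
  obtains u where "norm u = 1" "\<And>y. y \<in> L \<Longrightarrow> (y - x) \<bullet> u = 0" "\<And>z. z \<in> K \<Longrightarrow> x \<bullet> u \<le> z \<bullet> u"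
proof -
  obtain a b where "a \<noteq> 0" and L_below: "\<And>y. y \<in> L \<Longrightarrow> a \<bullet> y \<le> b"
    and int_above: "\<And>z. z \<in> interior K \<Longrightarrow> b \<le> a \<bullet> z"
    using separating_hyperplane_sets[OF affine_imp_convex[OF assms(3)] convex_interior[OF assms(1)] _
        assms(2,5)] assms(4)
    by blast
  have L_orth: "a \<bullet> (y - x) = 0" if "y \<in> L" for y
  proof (rule ccontr)
    assume "a \<bullet> (y - x) \<noteq> 0"
    define k where "k = (b - a \<bullet> x + 1) / (a \<bullet> (y - x))"
    have "(1 - k) *\<^sub>R x + k *\<^sub>R y \<in> L"
      using mem_affine[OF assms(3,4) that] by simp
    then have "a \<bullet> ((1 - k) *\<^sub>R x + k *\<^sub>R y) \<le> b"
      by (rule L_below)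
    moreover have "a \<bullet> ((1 - k) *\<^sub>R x + k *\<^sub>R y) = a \<bullet> x + k * (a \<bullet> (y - x))"
      by (simp add: algebra_simps)
    ultimately show False
      using \<open>a \<bullet> (y - x) \<noteq> 0\<close> by (simp add: k_def)
  qed
  have "interior K \<subseteq> {z. a \<bullet> x \<le> a \<bullet> z}"
    using L_below[OF assms(4)] int_above by force
  then have "closure (interior K) \<subseteq> {z. a \<bullet> x \<le> a \<bullet> z}"
    by (rule closure_minimal) (rule closed_halfspace_ge)
  then have K_above: "a \<bullet> x \<le> a \<bullet> z" if "z \<in> K" for z
    using that closure_subset convex_closure_interior[OF assms(1,2)] by blast
  show ?thesis
  proof
    show "norm (a /\<^sub>R norm a) = 1"
      using \<open>a \<noteq> 0\<close> by simp
    show "(y - x) \<bullet> (a /\<^sub>R norm a) = 0" if "y \<in> L" for y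
      using L_orth[OF that] by (simp add: inner_commute)
    show "x \<bullet> (a /\<^sub>R norm a) \<le> z \<bullet> (a /\<^sub>R norm a)" if "z \<in> K" for z
      using K_above[OF that] by (simp add: inner_commute mult_left_mono)
  qed
qed

lemma exists_unit_orthogonal_to_affine:
  fixes L :: "'a::euclidean_space set"
  assumes "x \<in> L" "aff_dim L + 1 < int DIM('a)"
  obtains w where "norm w = 1" "u \<bullet> w = 0" "\<And>y. y \<in> L \<Longrightarrow> (y - x) \<bullet> w = 0"
proof -
  define V where "V = (\<lambda>y. y - x) ` L"
  have "aff_dim L = int (dim V)"
    unfolding V_def using assms(1) by (intro aff_dim_eq_dim_subtract hull_inc)
  then have "dim (insert u V) < DIM('a)"
    using assms(2) dim_insert[of u V] by (simp split: if_splits)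
  then obtain w where "w \<noteq> 0" and orth: "\<And>y. y \<in> span (insert u V) \<Longrightarrow> orthogonal w y"
    by (rule orthogonal_to_subspace_exists) blast
  show ?thesis
  proof
    show "norm (w /\<^sub>R norm w) = 1"
      using \<open>w \<noteq> 0\<close> by simp
    show "u \<bullet> (w /\<^sub>R norm w) = 0"
      using orth[OF span_base[of u]] by (simp add: orthogonal_def inner_commute)
    show "(y - x) \<bullet> (w /\<^sub>R norm w) = 0" if "y \<in> L" for y
      using orth[OF span_base[of "y - x"]] that by (simp add: V_def orthogonal_def inner_commute)
  qed
qed

lemma inner_square_eq_1_if_hyperplanes_eq:
  fixes a b x :: "'a::real_inner"
  assumes "norm a = 1" "norm b = 1" "{y. y \<bullet> a = x \<bullet> a} = {y. y \<bullet> b = x \<bullet> b}"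
  shows "(a \<bullet> b)\<^sup>2 = 1"
proof -
  have aa: "a \<bullet> a = 1" and bb: "b \<bullet> b = 1"
    using assms(1,2) by (simp_all add: norm_eq_1)
  define y where "y = x + b - (a \<bullet> b) *\<^sub>R a"
  have "y \<bullet> a = x \<bullet> a"
    using aa by (simp add: y_def algebra_simps inner_commute)
  with assms(3) have "y \<bullet> b = x \<bullet> b"
    by blast
  then show ?thesis
    using bb by (simp add: y_def algebra_simps inner_commute power2_eq_square)
qed

definition plane_direction :: "'a::real_inner \<Rightarrow> 'a \<Rightarrow> real \<Rightarrow> 'a" where
  "plane_direction u w \<phi> = cos \<phi> *\<^sub>R u + sin \<phi> *\<^sub>R w"

lemma inner_plane_direction:
  fixes u w :: "'a::real_inner"
  assumes "norm u = 1" "norm w = 1" "u \<bullet> w = 0"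
  shows "plane_direction u w \<phi> \<bullet> plane_direction u w \<psi> = cos (\<phi> - \<psi>)"
  using assms by (simp add: plane_direction_def inner_add_left inner_add_right inner_commute norm_eq_1
      cos_diff)

lemma norm_plane_direction:
  fixes u w :: "'a::real_inner"
  assumes "norm u = 1" "norm w = 1" "u \<bullet> w = 0"
  shows "norm (plane_direction u w \<phi>) = 1"
  using inner_plane_direction[OF assms, of \<phi> \<phi>] by (simp add: norm_eq_1)

lemma hyperplanes_plane_direction_distinct:
  fixes u w x :: "'a::real_inner"
  assumes uw: "norm u = 1" "norm w = 1" "u \<bullet> w = 0"
    and "0 < \<phi>" "\<phi> < pi" "0 < \<psi>" "\<psi> < pi" "\<phi> \<noteq> \<psi>"
  shows "{y. y \<bullet> plane_direction u w \<phi> = x \<bullet> plane_direction u w \<phi>}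
    \<noteq> {y. y \<bullet> plane_direction u w \<psi> = x \<bullet> plane_direction u w \<psi>}"
proof
  assume "{y. y \<bullet> plane_direction u w \<phi> = x \<bullet> plane_direction u w \<phi>}
    = {y. y \<bullet> plane_direction u w \<psi> = x \<bullet> plane_direction u w \<psi>}"
  from inner_square_eq_1_if_hyperplanes_eq[OF norm_plane_direction[OF uw]
      norm_plane_direction[OF uw] this]
  have "(sin (\<phi> - \<psi>))\<^sup>2 = 0"
    by (simp add: inner_plane_direction[OF uw] cos_squared_eq)
  with sin_eq_0_pi[of "\<phi> - \<psi>"] assms(4-8) show False
    by simp
qed

lemma exists_angle_Hminus_level:
  fixes K :: "'a::euclidean_space set"
  assumes K: "K \<in> lmeasurable" "0 < measure lebesgue K"
    and uw: "norm u = 1" "norm w = 1" "u \<bullet> w = 0"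
    and support: "\<And>z. z \<in> K \<Longrightarrow> x \<bullet> u \<le> z \<bullet> u"
    and "0 < \<alpha>" "\<alpha> < 1"
  obtains \<phi> where "0 < \<phi>" "\<phi> < pi"
    "measure lebesgue (K \<inter> Hminus (plane_direction u w \<phi>) (x \<bullet> plane_direction u w \<phi>))
      = \<alpha> * measure lebesgue K"
proof -
  define g where "g \<phi> = measure lebesgue (K \<inter> Hminus (plane_direction u w \<phi>) (x \<bullet> plane_direction u w \<phi>))"
    for \<phi>
  have "plane_direction u w \<phi> \<noteq> 0" for \<phi>
    using norm_plane_direction[OF uw, of \<phi>] by auto
  then have "continuous_on {0..pi} g"
    unfolding g_def using K(1)
    by (intro continuous_on_measure_Int_Hminus) (auto simp: plane_direction_def intro!: continuous_intros)
  moreover have "K \<inter> Hminus (plane_direction u w 0) (x \<bullet> plane_direction u w 0) = K"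
    using support by (auto simp: plane_direction_def Hminus_def)
  moreover have "K \<inter> Hminus (plane_direction u w pi) (x \<bullet> plane_direction u w pi) \<subseteq> {y. y \<bullet> u = x \<bullet> u}"
    using support by (force simp: plane_direction_def Hminus_def)
  then have "g pi = 0"
    unfolding g_def using uw(1) K(1) sets_lebesgue_halfspaces(1)
    by (intro measure_eq_0_null_sets null_sets_subset[OF hyperplane_null_sets]) auto
  ultimately have "g pi \<le> \<alpha> * measure lebesgue K" "\<alpha> * measure lebesgue K \<le> g 0"
    "continuous_on {0..pi} g"
    using K(2) \<open>0 < \<alpha>\<close> \<open>\<alpha> < 1\<close> by (simp_all add: g_def)
  then obtain \<phi> where "0 \<le> \<phi>" "\<phi> \<le> pi" "g \<phi> = \<alpha> * measure lebesgue K"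
    using IVT2'[of g pi _ 0] by auto
  moreover have "g \<phi> \<noteq> g 0" "g \<phi> \<noteq> g pi"
    using calculation K(2) \<open>0 < \<alpha>\<close> \<open>\<alpha> < 1\<close> \<open>g pi = 0\<close> \<open>K \<inter> _ = K\<close> by (auto simp: g_def)
  ultimately show ?thesis
    using that by (fastforce simp: g_def less_le)
qed

lemma two_flot_hyperplanes_through_codim2:
  fixes K :: "'a::euclidean_space set"
  assumes K: "convex_body K" and \<delta>: "0 < \<delta>" "\<delta> < 1" "\<delta> \<noteq> 1/2"
    and L: "affine L" "aff_dim L = int DIM('a) - 2" "x \<in> L" "L \<inter> interior K = {}"
  obtains \<theta>1 \<theta>2 where "norm \<theta>1 = 1" "norm \<theta>2 = 1"
    "flot_hyperplane K \<delta> \<theta>1 \<noteq> flot_hyperplane K \<delta> \<theta>2"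
    "L \<subseteq> flot_hyperplane K \<delta> \<theta>1" "L \<subseteq> flot_hyperplane K \<delta> \<theta>2"
proof -
  obtain u where u: "norm u = 1" "\<And>y. y \<in> L \<Longrightarrow> (y - x) \<bullet> u = 0" "\<And>z. z \<in> K \<Longrightarrow> x \<bullet> u \<le> z \<bullet> u"
    using supporting_normal_through_affine[OF _ _ L(1,3,4)] K by (auto simp: convex_body_def)
  have "aff_dim L + 1 < int DIM('a)"
    using L(2) by simp
  then obtain w where w: "norm w = 1" "u \<bullet> w = 0" "\<And>y. y \<in> L \<Longrightarrow> (y - x) \<bullet> w = 0"
    by (rule exists_unit_orthogonal_to_affine[OF L(3), where u = u]) blast
  let ?d = "plane_direction u w"
  note d_unit = norm_plane_direction[OF u(1) w(1,2)]
  have d_ne_0: "?d \<phi> \<noteq> 0" for \<phi>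
    using d_unit[of \<phi>] by auto
  have d_L: "y \<bullet> ?d \<phi> = x \<bullet> ?d \<phi>" if "y \<in> L" for y \<phi>
    using u(2)[OF that] w(3)[OF that] by (simp add: plane_direction_def inner_add_right algebra_simps)
  have Kpos: "K \<in> lmeasurable" "0 < measure lebesgue K"
    using K by (simp_all add: convex_body_lmeasurable convex_body_measure_pos)
  obtain \<phi>1 where \<phi>1: "0 < \<phi>1" "\<phi>1 < pi"
      "measure lebesgue (K \<inter> Hminus (?d \<phi>1) (x \<bullet> ?d \<phi>1)) = \<delta> * measure lebesgue K"
    using exists_angle_Hminus_level[OF Kpos u(1) w(1,2) u(3) \<delta>(1,2)] by blast
  obtain \<phi>2 where \<phi>2: "0 < \<phi>2" "\<phi>2 < pi"
      "measure lebesgue (K \<inter> Hminus (?d \<phi>2) (x \<bullet> ?d \<phi>2)) = (1 - \<delta>) * measure lebesgue K"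
    using exists_angle_Hminus_level[OF Kpos u(1) w(1,2) u(3), of "1 - \<delta>"] \<delta>(1,2) by auto
  have t1: "tK K (?d \<phi>1) \<delta> = x \<bullet> ?d \<phi>1"
    using tK_eq_iff[OF K d_ne_0 \<delta>(1,2)] \<phi>1(3) by simp
  have "tK K (?d \<phi>2) (1 - \<delta>) = x \<bullet> ?d \<phi>2"
    using tK_eq_iff[OF K d_ne_0, of "1 - \<delta>"] \<phi>2(3) \<delta>(1,2) by simp
  then have t2: "tK K (- ?d \<phi>2) \<delta> = x \<bullet> - ?d \<phi>2"
    using tK_uminus[OF K d_ne_0 \<delta>(1,2)] by simp
  have "\<phi>1 \<noteq> \<phi>2"
    using \<phi>1(3) \<phi>2(3) \<delta>(3) Kpos(2) by auto
  from hyperplanes_plane_direction_distinct[OF u(1) w(1,2) \<phi>1(1,2) \<phi>2(1,2) this]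
  have "flot_hyperplane K \<delta> (?d \<phi>1) \<noteq> flot_hyperplane K \<delta> (- ?d \<phi>2)"
    using t1 t2 by (simp add: flot_hyperplane_def)
  moreover have "L \<subseteq> flot_hyperplane K \<delta> (?d \<phi>1)" "L \<subseteq> flot_hyperplane K \<delta> (- ?d \<phi>2)"
    using d_L t1 t2 by (auto simp: flot_hyperplane_def)
  ultimately show ?thesis
    using that[of "?d \<phi>1" "- ?d \<phi>2"] d_unit by simp
qed

section \<open>Halving hyperplanes through a supporting flat\<close>

lemma open_convex_meets_opposite_quadrants:
  fixes U :: "'a::euclidean_space set"
  assumes "open U" "convex U" "p \<in> U" "q \<in> U" "x \<bullet> e1 < p \<bullet> e1" "q \<bullet> e1 < x \<bullet> e1"
    and "norm e1 = 1" "norm e2 = 1" "e1 \<noteq> - e2"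
  obtains z where "z \<in> U" "x \<bullet> e1 < z \<bullet> e1" "x \<bullet> e2 < z \<bullet> e2"
    | z where "z \<in> U" "z \<bullet> e1 < x \<bullet> e1" "z \<bullet> e2 < x \<bullet> e2"
proof -
  have "e1 \<bullet> q \<le> e1 \<bullet> x" "e1 \<bullet> x \<le> e1 \<bullet> p"
    using assms(5,6) by (simp_all add: inner_commute)
  from connected_ivt_hyperplane[OF convex_connected[OF assms(2)] assms(4,3) this]
  obtain w where "w \<in> U" "e1 \<bullet> w = e1 \<bullet> x"
    by blast
  then have w: "w \<bullet> e1 = x \<bullet> e1"
    by (simp add: inner_commute)
  obtain r where "r > 0" "ball w r \<subseteq> U"
    using assms(1) \<open>w \<in> U\<close> open_contains_ball by blast
  have e11: "e1 \<bullet> e1 = 1" and e22: "e2 \<bullet> e2 = 1"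
    using assms(7,8) by (simp_all add: norm_eq_1)
  have "e1 + e2 \<noteq> 0"
    using assms(9) by (simp add: add_eq_0_iff2)
  then have "0 < (e1 + e2) \<bullet> (e1 + e2)"
    by simp
  then have "0 < 1 + e1 \<bullet> e2"
    using e11 e22 by (simp add: inner_add_left inner_add_right inner_commute[of e2 e1])
  define v where "v = e1 + e2"
  have v: "0 < v \<bullet> e1" "0 < v \<bullet> e2"
    using \<open>0 < 1 + e1 \<bullet> e2\<close> e11 e22 by (simp_all add: v_def inner_add_left inner_commute[of e2 e1])
  define \<epsilon> where "\<epsilon> = r / 4"
  have "norm (\<epsilon> *\<^sub>R v) < r"
    using norm_triangle_ineq[of e1 e2] assms(7,8) \<open>r > 0\<close> by (simp add: \<epsilon>_def v_def)
  then have "w + \<epsilon> *\<^sub>R v \<in> U" "w - \<epsilon> *\<^sub>R v \<in> U"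
    using \<open>ball w r \<subseteq> U\<close> by (auto simp: dist_norm)
  moreover have "0 < \<epsilon> * (v \<bullet> e1)" "0 < \<epsilon> * (v \<bullet> e2)"
    using \<open>r > 0\<close> v by (simp_all add: \<epsilon>_def)
  ultimately show ?thesis
  proof (cases "x \<bullet> e2 \<le> w \<bullet> e2")
    case True
    have "x \<bullet> e1 < (w + \<epsilon> *\<^sub>R v) \<bullet> e1" "x \<bullet> e2 < (w + \<epsilon> *\<^sub>R v) \<bullet> e2"
      using True w \<open>0 < \<epsilon> * (v \<bullet> e1)\<close> \<open>0 < \<epsilon> * (v \<bullet> e2)\<close> by (simp_all add: inner_add_left)
    then show ?thesis
      using that(1) \<open>w + \<epsilon> *\<^sub>R v \<in> U\<close> by blast
  next
    case False
    have "(w - \<epsilon> *\<^sub>R v) \<bullet> e1 < x \<bullet> e1" "(w - \<epsilon> *\<^sub>R v) \<bullet> e2 < x \<bullet> e2"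
      using False w \<open>0 < \<epsilon> * (v \<bullet> e1)\<close> \<open>0 < \<epsilon> * (v \<bullet> e2)\<close> by (simp_all add: inner_diff_left)
    then show ?thesis
      using that(2) \<open>w - \<epsilon> *\<^sub>R v \<in> U\<close> by blast
  qed
qed

lemma halving_flot_hyperplanes_quadrant_meets:
  fixes K :: "'a::euclidean_space set"
  assumes K: "convex_body K" and e: "norm e1 = 1" "norm e2 = 1" "e1 \<noteq> - e2"
    and half: "tK K e1 (1/2) = x \<bullet> e1" "tK K e2 (1/2) = x \<bullet> e2"
  obtains y where "y \<in> K" "x \<bullet> e1 < y \<bullet> e1" "x \<bullet> e2 < y \<bullet> e2"
proof (rule ccontr)
  assume "\<not> thesis"
  then have no_pos: "K \<inter> {y. x \<bullet> e1 < y \<bullet> e1} \<inter> {y. x \<bullet> e2 < y \<bullet> e2} = {}"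
    using that by blast
  have "convex K" "closed K" "K \<in> lmeasurable"
    using K by (auto simp: convex_body_def compact_imp_closed convex_body_lmeasurable)
  have "e1 \<noteq> 0" "e2 \<noteq> 0"
    using e by auto
  note e1_half = measure_halfspaces_tK_half[OF K \<open>e1 \<noteq> 0\<close> half(1)]
  note e2_half = measure_halfspaces_tK_half[OF K \<open>e2 \<noteq> 0\<close> half(2)]
  have "measure lebesgue (K \<inter> {y. y \<bullet> e1 < x \<bullet> e1} \<inter> {y. y \<bullet> e2 < x \<bullet> e2}) = 0"
    using measure_opposite_quadrants_eq[OF \<open>K \<in> lmeasurable\<close> \<open>e1 \<noteq> 0\<close> \<open>e2 \<noteq> 0\<close>, of "x \<bullet> e1" "x \<bullet> e2"]
      e1_half(1) e2_half(2) no_pos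
    by simp
  moreover have "K \<inter> {y. y \<bullet> e1 < x \<bullet> e1} \<inter> {y. y \<bullet> e2 < x \<bullet> e2} \<in> lmeasurable"
    using \<open>K \<in> lmeasurable\<close> by (intro fmeasurable_Int_fmeasurable sets_lebesgue_halfspaces(3))
  ultimately have no_neg: "interior K \<inter> {y. y \<bullet> e1 < x \<bullet> e1} \<inter> {y. y \<bullet> e2 < x \<bullet> e2} = {}"
    using interior_subset
    by (intro open_subset_measure_zero_empty open_Int open_interior open_halfspace_component_lt) auto
  have "0 < measure lebesgue (K \<inter> {y. x \<bullet> e1 < y \<bullet> e1})"
    "0 < measure lebesgue (K \<inter> {y. y \<bullet> e1 < x \<bullet> e1})"
    using convex_body_measure_pos[OF K] e1_half by simp_all
  then obtain p q where p: "p \<in> K \<inter> {y. x \<bullet> e1 < y \<bullet> e1}" "p \<in> interior K"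
    and q: "q \<in> K \<inter> {y. y \<bullet> e1 < x \<bullet> e1}" "q \<in> interior K"
    by (metis measure_pos_meets_interior[OF \<open>convex K\<close> \<open>closed K\<close> Int_lower1])
  show False
  proof (rule open_convex_meets_opposite_quadrants[OF open_interior
        convex_interior[OF \<open>convex K\<close>] p(2) q(2) _ _ e])
    show "x \<bullet> e1 < p \<bullet> e1" "q \<bullet> e1 < x \<bullet> e1"
      using p(1) q(1) by simp_all
  next
    fix z assume "z \<in> interior K" "x \<bullet> e1 < z \<bullet> e1" "x \<bullet> e2 < z \<bullet> e2"
    then show False
      using no_pos interior_subset by blast
  next
    fix z assume "z \<in> interior K" "z \<bullet> e1 < x \<bullet> e1" "z \<bullet> e2 < x \<bullet> e2"
    then show False
      using no_neg by blast
  qed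
qed

lemma unit_in_span_singleton:
  fixes a b :: "'a::real_normed_vector"
  assumes "norm a = 1" "norm b = 1" "a \<in> span {b}"
  shows "a = b \<or> a = - b"
proof -
  obtain k where k: "a = k *\<^sub>R b"
    using assms(3) by (auto simp: span_singleton)
  with assms(1,2) have "\<bar>k\<bar> = 1"
    by simp
  then have "k = 1 \<or> k = -1"
    by linarith
  with k show ?thesis
    by auto
qed

lemma in_span_pair_if_orthogonal_to_codim2:
  fixes u a b :: "'a::euclidean_space"
  assumes "subspace T" "dim T = DIM('a) - 2"
    and "\<And>v c. v \<in> T \<Longrightarrow> c \<in> {u, a, b} \<Longrightarrow> v \<bullet> c = 0"
    and "b \<noteq> 0" "a \<notin> span {b}"
  shows "u \<in> span {a, b}"
proof -
  have "dim {a, b} = 2"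
    using assms(4,5) by (simp add: dim_insert)
  moreover have "dim (T \<union> {u, a, b}) = dim T + dim {u, a, b}"
    by (rule dim_orthogonal_sum) (use assms(3) in blast)
  moreover have "dim (T \<union> {u, a, b}) \<le> DIM('a)" "dim {a, b} \<le> DIM('a)"
    by (rule dim_subset_UNIV)+
  moreover have "dim {a, b} \<le> dim {u, a, b}"
    by (rule dim_subset) auto
  ultimately have "dim (insert u {a, b}) \<le> dim {a, b}"
    using assms(2) by linarith
  then show ?thesis
    by (simp add: dim_insert split: if_splits)
qed

lemma exists_signed_pair_against:
  fixes u a b :: "'a::real_inner"
  assumes "u \<in> span {a, b}" "u \<noteq> 0"
  obtains e1 e2 where "e1 = a \<or> e1 = - a" "e2 = b \<or> e2 = - b"
    "\<And>v. 0 < v \<bullet> e1 \<Longrightarrow> 0 < v \<bullet> e2 \<Longrightarrow> v \<bullet> u < 0"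
proof -
  obtain \<alpha> \<beta> where u: "u = \<alpha> *\<^sub>R a + \<beta> *\<^sub>R b"
    using assms(1) by (auto simp: span_insert span_singleton algebra_simps)
  define e1 where "e1 = (if 0 \<le> \<alpha> then - a else a)"
  define e2 where "e2 = (if 0 \<le> \<beta> then - b else b)"
  show ?thesis
  proof (rule that[of e1 e2])
    fix v assume v: "0 < v \<bullet> e1" "0 < v \<bullet> e2"
    have "v \<bullet> u = - (\<bar>\<alpha>\<bar> * (v \<bullet> e1)) - \<bar>\<beta>\<bar> * (v \<bullet> e2)"
      by (simp add: u e1_def e2_def inner_add_right)
    moreover have "\<alpha> \<noteq> 0 \<or> \<beta> \<noteq> 0"
      using assms(2) u by auto
    then have "0 < \<bar>\<alpha>\<bar> * (v \<bullet> e1) \<or> 0 < \<bar>\<beta>\<bar> * (v \<bullet> e2)"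
      using v by auto
    moreover have "0 \<le> \<bar>\<alpha>\<bar> * (v \<bullet> e1)" "0 \<le> \<bar>\<beta>\<bar> * (v \<bullet> e2)"
      using v by simp_all
    ultimately show "v \<bullet> u < 0"
      by linarith
  qed (simp_all add: e1_def e2_def)
qed

lemma halving_flot_hyperplanes_through_supported_codim2_eq:
  fixes K :: "'a::euclidean_space set"
  assumes K: "convex_body K"
    and u: "norm u = 1" "\<And>z. z \<in> K \<Longrightarrow> x \<bullet> u \<le> z \<bullet> u"
    and T: "subspace T" "dim T = DIM('a) - 2" "\<And>v. v \<in> T \<Longrightarrow> v \<bullet> u = 0"
    and \<theta>: "norm \<theta>1 = 1" "norm \<theta>2 = 1"
    and L: "(+) x ` T \<subseteq> flot_hyperplane K (1/2) \<theta>1" "(+) x ` T \<subseteq> flot_hyperplane K (1/2) \<theta>2"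
  shows "flot_hyperplane K (1/2) \<theta>1 = flot_hyperplane K (1/2) \<theta>2"
proof (rule ccontr)
  assume ne: "flot_hyperplane K (1/2) \<theta>1 \<noteq> flot_hyperplane K (1/2) \<theta>2"
  note t1 = flot_hyperplane_contains_translate[OF T(1) L(1)]
  note t2 = flot_hyperplane_contains_translate[OF T(1) L(2)]
  have "\<theta>1 \<notin> span {\<theta>2}"
  proof
    assume "\<theta>1 \<in> span {\<theta>2}"
    then have "\<theta>1 = \<theta>2 \<or> \<theta>1 = - \<theta>2"
      by (rule unit_in_span_singleton[OF \<theta>])
    then show False
      using ne t1(1) t2(1) by (auto simp: flot_hyperplane_def)
  qed
  have "\<theta>1 \<noteq> 0" "\<theta>2 \<noteq> 0" "u \<noteq> 0"
    using \<theta> u(1) by auto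
  have "u \<in> span {\<theta>1, \<theta>2}"
    using T t1(2) t2(2) \<open>\<theta>2 \<noteq> 0\<close> \<open>\<theta>1 \<notin> span {\<theta>2}\<close>
    by (intro in_span_pair_if_orthogonal_to_codim2[of T]) auto
  then obtain e1 e2 where e1: "e1 = \<theta>1 \<or> e1 = - \<theta>1" and e2: "e2 = \<theta>2 \<or> e2 = - \<theta>2"
    and against: "\<And>v. 0 < v \<bullet> e1 \<Longrightarrow> 0 < v \<bullet> e2 \<Longrightarrow> v \<bullet> u < 0"
    by (rule exists_signed_pair_against[OF _ \<open>u \<noteq> 0\<close>]) blast
  have "norm e1 = 1" "norm e2 = 1"
    using e1 e2 \<theta> by auto
  moreover have "tK K e1 (1/2) = x \<bullet> e1" "tK K e2 (1/2) = x \<bullet> e2"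
    using e1 e2 t1(1) t2(1) tK_half_uminus[OF K \<open>\<theta>1 \<noteq> 0\<close>] tK_half_uminus[OF K \<open>\<theta>2 \<noteq> 0\<close>] by auto
  moreover have "e1 \<noteq> - e2"
  proof
    assume "e1 = - e2"
    with e1 e2 have "\<theta>1 = \<theta>2 \<or> \<theta>1 = - \<theta>2"
      by auto
    then have "\<theta>1 \<in> span {\<theta>2}"
      by (auto intro: span_base span_neg)
    with \<open>\<theta>1 \<notin> span {\<theta>2}\<close> show False ..
  qed
  ultimately obtain y where "y \<in> K" "x \<bullet> e1 < y \<bullet> e1" "x \<bullet> e2 < y \<bullet> e2"
    using halving_flot_hyperplanes_quadrant_meets[OF K] by metis
  then have "(y - x) \<bullet> u < 0"
    by (intro against) (simp_all add: inner_diff_left)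
  with u(2)[OF \<open>y \<in> K\<close>] show False
    by (simp add: inner_diff_left)
qed

lemma exists_frontier_supporting_normal:
  fixes K :: "'a::euclidean_space set"
  assumes "convex_body K"
  obtains x u where "x \<in> frontier K" "norm u = 1" "\<And>z. z \<in> K \<Longrightarrow> x \<bullet> u \<le> z \<bullet> u"
proof -
  have "convex K" "interior K \<noteq> {}" "bounded K"
    using assms unfolding convex_body_def by (simp_all add: compact_imp_bounded)
  have "K \<noteq> {}"
    using \<open>interior K \<noteq> {}\<close> interior_subset by blast
  moreover have "K \<noteq> UNIV"
    using \<open>bounded K\<close> not_bounded_UNIV by blast
  ultimately obtain x where x: "x \<in> frontier K"
    using frontier_not_empty[of K] by blast
  then have "{x} \<inter> interior K = {}"
    by (simp add: frontier_def)
  then obtain u where "norm u = 1" "\<And>z. z \<in> K \<Longrightarrow> x \<bullet> u \<le> z \<bullet> u"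
    by (rule supporting_normal_through_affine[OF \<open>convex K\<close> \<open>interior K \<noteq> {}\<close> affine_sing singletonI])
      blast
  with x show ?thesis
    using that by blast
qed

lemma exists_orthogonal_subspace_codim2:
  fixes u :: "'a::euclidean_space"
  assumes "u \<noteq> 0"
  obtains T where "subspace T" "dim T = DIM('a) - 2" "\<And>v. v \<in> T \<Longrightarrow> v \<bullet> u = 0"
proof -
  have "DIM('a) - 2 \<le> dim {v. u \<bullet> v = 0}"
    using dim_hyperplane[OF assms] by simp
  then obtain T where T: "subspace T" "T \<subseteq> span {v. u \<bullet> v = 0}" "dim T = DIM('a) - 2"
    by (rule choose_subspace_of_subspace)
  have "span {v. u \<bullet> v = 0} = {v. u \<bullet> v = 0}"
    by (rule span_eq_iff[THEN iffD2, OF subspace_hyperplane])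
  then have "u \<bullet> v = 0" if "v \<in> T" for v
    using T(2) that by blast
  with T(1,3) show ?thesis
    using that by (simp add: inner_commute)
qed

lemma translate_orthogonal_subspace_misses_interior:
  fixes K T :: "'a::euclidean_space set"
  assumes "u \<noteq> 0" "\<And>z. z \<in> K \<Longrightarrow> x \<bullet> u \<le> z \<bullet> u" "\<And>v. v \<in> T \<Longrightarrow> v \<bullet> u = 0"
  shows "(+) x ` T \<inter> interior K = {}"
proof -
  have "interior K \<subseteq> interior {z. x \<bullet> u \<le> u \<bullet> z}"
    using assms(2) by (intro interior_mono) (auto simp: inner_commute)
  then have int_above: "x \<bullet> u < u \<bullet> z" if "z \<in> interior K" for z
    using interior_halfspace_ge[OF assms(1)] that by blast
  show ?thesis
  proof (rule ccontr)
    assume "(+) x ` T \<inter> interior K \<noteq> {}"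
    then obtain v where "v \<in> T" "x + v \<in> interior K"
      by blast
    with int_above[of "x + v"] assms(3)[of v] show False
      by (simp add: inner_add_right inner_commute)
  qed
qed

lemma exists_codim2_without_two_halving_flot_hyperplanes:
  fixes K :: "'a::euclidean_space set"
  assumes "DIM('a) \<ge> 2" and K: "convex_body K"
  obtains x L where "x \<in> frontier K" "affine L" "aff_dim L = int DIM('a) - 2" "x \<in> L"
    "L \<inter> interior K = {}"
    "\<And>\<theta>1 \<theta>2. norm \<theta>1 = 1 \<Longrightarrow> norm \<theta>2 = 1 \<Longrightarrow> L \<subseteq> flot_hyperplane K (1/2) \<theta>1 \<Longrightarrow>
      L \<subseteq> flot_hyperplane K (1/2) \<theta>2 \<Longrightarrow> flot_hyperplane K (1/2) \<theta>1 = flot_hyperplane K (1/2) \<theta>2"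
proof -
  obtain x u where x: "x \<in> frontier K" and u: "norm u = 1" "\<And>z. z \<in> K \<Longrightarrow> x \<bullet> u \<le> z \<bullet> u"
    using exists_frontier_supporting_normal[OF K] by blast
  then have "u \<noteq> 0"
    by auto
  then obtain T where T: "subspace T" "dim T = DIM('a) - 2" "\<And>v. v \<in> T \<Longrightarrow> v \<bullet> u = 0"
    by (rule exists_orthogonal_subspace_codim2) blast
  show ?thesis
  proof (rule that[OF x])
    show "affine ((+) x ` T)"
      by (intro affine_translation[THEN iffD1] subspace_imp_affine T(1))
    show "aff_dim ((+) x ` T) = int DIM('a) - 2"
      unfolding aff_dim_translation_eq aff_dim_subspace[OF T(1)] T(2) using assms(1) by simp
    show "x \<in> (+) x ` T"
      using subspace_0[OF T(1)] by force
    show "(+) x ` T \<inter> interior K = {}"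
      by (rule translate_orthogonal_subspace_misses_interior[OF \<open>u \<noteq> 0\<close> u(2) T(3)])
    show "flot_hyperplane K (1/2) \<theta>1 = flot_hyperplane K (1/2) \<theta>2"
      if "norm \<theta>1 = 1" "norm \<theta>2 = 1" "(+) x ` T \<subseteq> flot_hyperplane K (1/2) \<theta>1"
        "(+) x ` T \<subseteq> flot_hyperplane K (1/2) \<theta>2" for \<theta>1 \<theta>2
      by (rule halving_flot_hyperplanes_through_supported_codim2_eq[OF K u T that])
  qed
qed

theorem lemma3:
  fixes K :: "'a::euclidean_space set" and \<delta> :: real
  assumes "DIM('a) \<ge> 2"
    and "convex_body K"
    and "0 < \<delta>" and "\<delta> < 1"
  shows "\<delta> \<noteq> 1/2 \<longleftrightarrow>
    (\<forall>x \<in> frontier K. \<forall>L :: 'a set.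
       affine L \<and> aff_dim L = int DIM('a) - 2 \<and> x \<in> L \<and> L \<inter> interior K = {} \<longrightarrow>
       (\<exists>\<theta>1 \<theta>2. norm \<theta>1 = 1 \<and> norm \<theta>2 = 1 \<and>
          flot_hyperplane K \<delta> \<theta>1 \<noteq> flot_hyperplane K \<delta> \<theta>2 \<and>
          L \<subseteq> flot_hyperplane K \<delta> \<theta>1 \<and> L \<subseteq> flot_hyperplane K \<delta> \<theta>2))"
    (is "_ \<longleftrightarrow> (\<forall>x \<in> frontier K. \<forall>L. ?codim2 x L \<longrightarrow> ?two_hyperplanes L)")
proof
  assume "\<delta> \<noteq> 1/2"
  show "\<forall>x \<in> frontier K. \<forall>L. ?codim2 x L \<longrightarrow> ?two_hyperplanes L"
  proof (intro ballI allI impI)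
    fix x L
    assume "?codim2 x L"
    then show "?two_hyperplanes L"
      using two_flot_hyperplanes_through_codim2[OF assms(2-4) \<open>\<delta> \<noteq> 1/2\<close>] by metis
  qed
next
  assume two: "\<forall>x \<in> frontier K. \<forall>L. ?codim2 x L \<longrightarrow> ?two_hyperplanes L"
  obtain x L where "x \<in> frontier K" "?codim2 x L"
    and "\<And>\<theta>1 \<theta>2. norm \<theta>1 = 1 \<Longrightarrow> norm \<theta>2 = 1 \<Longrightarrow> L \<subseteq> flot_hyperplane K (1/2) \<theta>1 \<Longrightarrow>
      L \<subseteq> flot_hyperplane K (1/2) \<theta>2 \<Longrightarrow> flot_hyperplane K (1/2) \<theta>1 = flot_hyperplane K (1/2) \<theta>2"
    by (rule exists_codim2_without_two_halving_flot_hyperplanes[OF assms(1,2)]) blast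
  with two show "\<delta> \<noteq> 1/2"
    by metis
qed

end
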